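(* Let $S$ be a left adequate semigroup with an adequate transversal $S^0$. Then for all $x\in S$, $f_x=f_{\bar x}$, and so $x=e_x\bar x$.
   Context: For a semigroup $S$, $\mathcal{R}^\ast=\{(a,b): \text{for all } x,y\in S^1,\ xa=ya \iff xb=yb\}$ and $\mathcal{L}^\ast$ is defined dually. $S$ is abundant if every $\mathcal{R}^\ast$-class and every $\mathcal{L}^\ast$-class contains an idempotent; adequate if abundant and its idempotents commute; left adequate if abundant and every $\mathcal{R}^\ast$-class contains a unique idempotent. In an adequate semigroup $a^+,a^\ast$ denote the unique idempotents in the $\mathcal{R}^\ast$-, resp. $\mathcal{L}^\ast$-class of $a$. A subsemigroup $U$ of abundant $S$ is a $\ast$-subsemigroup if $U$ is abundant and $\mathcal{L}^\ast_U=\mathcal{L}^\ast_S\cap(U\times U)$, $\mathcal{R}^\ast_U=\mathcal{R}^\ast_S\cap(U\times U)$. An adequate $\ast$-subsemigroup $S^0$ of abundant $S$ is an adequate transversal if for each $x\in S$ there is a unique $\bar x\in S^0$ and idempotents $e,f$ of $S$ with $x=e\bar xf$, $e\,\mathcal{L}\,\bar x^+$, $f\,\mathcal{R}\,\bar x^\ast$; these $e,f$ are uniquely determined and denoted $e_x,f_x$. *)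

theory Defs
  imports Main
begin

text \<open>The semigroup S is the whole type 'a (class semigroup_mult); subsets U of it
carry the restricted structure. S^1 is modelled by 'a option, None being the
adjoined identity.\<close>

definition idem :: "'a::semigroup_mult \<Rightarrow> bool" where
  "idem e \<longleftrightarrow> e * e = e"

fun lmul :: "'a::semigroup_mult option \<Rightarrow> 'a \<Rightarrow> 'a" where
  "lmul None a = a"
| "lmul (Some x) a = x * a"

fun rmul :: "'a::semigroup_mult \<Rightarrow> 'a option \<Rightarrow> 'a" where
  "rmul a None = a"
| "rmul a (Some x) = a * x"

definition one_ext :: "'a set \<Rightarrow> 'a option set" where
  "one_ext U = insert None (Some ` U)"

definition Rstar :: "'a::semigroup_mult set \<Rightarrow> 'a \<Rightarrow> 'a \<Rightarrow> bool" where
  "Rstar U a b \<longleftrightarrow> a \<in> U \<and> b \<in> U \<and>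
     (\<forall>x\<in>one_ext U. \<forall>y\<in>one_ext U. lmul x a = lmul y a \<longleftrightarrow> lmul x b = lmul y b)"

definition Lstar :: "'a::semigroup_mult set \<Rightarrow> 'a \<Rightarrow> 'a \<Rightarrow> bool" where
  "Lstar U a b \<longleftrightarrow> a \<in> U \<and> b \<in> U \<and>
     (\<forall>x\<in>one_ext U. \<forall>y\<in>one_ext U. rmul a x = rmul a y \<longleftrightarrow> rmul b x = rmul b y)"

definition greenL :: "'a::semigroup_mult \<Rightarrow> 'a \<Rightarrow> bool" where
  "greenL a b \<longleftrightarrow> (\<exists>u v. a = lmul u b \<and> b = lmul v a)"

definition greenR :: "'a::semigroup_mult \<Rightarrow> 'a \<Rightarrow> bool" where
  "greenR a b \<longleftrightarrow> (\<exists>u v. a = rmul b u \<and> b = rmul a v)"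

definition subsemigroup :: "'a::semigroup_mult set \<Rightarrow> bool" where
  "subsemigroup U \<longleftrightarrow> (\<forall>a\<in>U. \<forall>b\<in>U. a * b \<in> U)"

definition abundant :: "'a::semigroup_mult set \<Rightarrow> bool" where
  "abundant U \<longleftrightarrow> subsemigroup U \<and>
     (\<forall>a\<in>U. (\<exists>e\<in>U. idem e \<and> Rstar U e a) \<and> (\<exists>e\<in>U. idem e \<and> Lstar U e a))"

definition adequate :: "'a::semigroup_mult set \<Rightarrow> bool" where
  "adequate U \<longleftrightarrow> abundant U \<and>
     (\<forall>e\<in>U. \<forall>f\<in>U. idem e \<longrightarrow> idem f \<longrightarrow> e * f = f * e)"

definition left_adequate :: "'a::semigroup_mult set \<Rightarrow> bool" where
  "left_adequate U \<longleftrightarrow> abundant U \<and>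
     (\<forall>a\<in>U. \<exists>!e. e \<in> U \<and> idem e \<and> Rstar U e a)"

definition star_subsemigroup :: "'a::semigroup_mult set \<Rightarrow> bool" where
  "star_subsemigroup U \<longleftrightarrow> subsemigroup U \<and> abundant U \<and>
     (\<forall>a\<in>U. \<forall>b\<in>U. Lstar U a b = Lstar UNIV a b) \<and>
     (\<forall>a\<in>U. \<forall>b\<in>U. Rstar U a b = Rstar UNIV a b)"

definition aplus :: "'a::semigroup_mult set \<Rightarrow> 'a \<Rightarrow> 'a" where
  "aplus U a = (THE e. e \<in> U \<and> idem e \<and> Rstar U e a)"

definition astar :: "'a::semigroup_mult set \<Rightarrow> 'a \<Rightarrow> 'a" where
  "astar U a = (THE e. e \<in> U \<and> idem e \<and> Lstar U e a)"

definition decomp :: "'a::semigroup_mult set \<Rightarrow> 'a \<Rightarrow> 'a \<Rightarrow> 'a \<Rightarrow> 'a \<Rightarrow> bool" where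
  "decomp S0 x xb e f \<longleftrightarrow> xb \<in> S0 \<and> idem e \<and> idem f \<and> x = e * xb * f \<and>
     greenL e (aplus S0 xb) \<and> greenR f (astar S0 xb)"

definition adequate_transversal :: "'a::semigroup_mult set \<Rightarrow> bool" where
  "adequate_transversal S0 \<longleftrightarrow> abundant (UNIV :: 'a set) \<and> adequate S0 \<and>
     star_subsemigroup S0 \<and> (\<forall>x. \<exists>!xb. \<exists>e f. decomp S0 x xb e f)"

definition bar :: "'a::semigroup_mult set \<Rightarrow> 'a \<Rightarrow> 'a" where
  "bar S0 x = (THE xb. \<exists>e f. decomp S0 x xb e f)"

definition e_of :: "'a::semigroup_mult set \<Rightarrow> 'a \<Rightarrow> 'a" where
  "e_of S0 x = (THE e. \<exists>f. decomp S0 x (bar S0 x) e f)"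

definition f_of :: "'a::semigroup_mult set \<Rightarrow> 'a \<Rightarrow> 'a" where
  "f_of S0 x = (THE f. \<exists>e. decomp S0 x (bar S0 x) e f)"

end

theory Submission
  imports Defs
begin

text \<open>Green's \<open>\<R>\<close> is contained in \<open>\<R>\<^sup>*\<close>, so in a left adequate semigroup two
  \<open>\<R>\<close>-related idempotents coincide; thus \<open>f\<^sub>x = (bar x)\<^sup>*\<close>. Since \<open>a = a\<^sup>+ a a\<^sup>*\<close> is an
  admissible decomposition of each \<open>a \<in> S\<^sup>0\<close>, \<open>bar\<close> fixes \<open>S\<^sup>0\<close>, which gives
  \<open>f\<^sub>x = f\<^bsub>bar x\<^esub>\<close>; and \<open>x = e\<^sub>x (bar x) (bar x)\<^sup>* = e\<^sub>x (bar x)\<close>.\<close>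

lemma one_ext_memI [simp]: "None \<in> one_ext U" "a \<in> U \<Longrightarrow> Some a \<in> one_ext U"
  unfolding one_ext_def by auto

lemma lmul_rmul_assoc: "lmul u (rmul a v) = rmul (lmul u a) v"
  by (cases u; cases v) (simp_all add: mult.assoc)

lemma Rstar_refl: "a \<in> U \<Longrightarrow> Rstar U a a"
  unfolding Rstar_def by simp

lemma Rstar_cancel:
  "Rstar U a b \<Longrightarrow> u \<in> one_ext U \<Longrightarrow> w \<in> one_ext U \<Longrightarrow>
    lmul u a = lmul w a \<longleftrightarrow> lmul u b = lmul w b"
  unfolding Rstar_def by blast

lemma Lstar_cancel:
  "Lstar U a b \<Longrightarrow> u \<in> one_ext U \<Longrightarrow> w \<in> one_ext U \<Longrightarrow>
    rmul a u = rmul a w \<longleftrightarrow> rmul b u = rmul b w"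
  unfolding Lstar_def by blast

lemma Rstar_idem_mult:
  assumes "idem e" "Rstar U e a"
  shows "e * a = a"
proof -
  have "e \<in> U" using assms(2) unfolding Rstar_def by simp
  have "lmul (Some e) e = lmul None e" using assms(1) by (simp add: idem_def)
  then have "lmul (Some e) a = lmul None a"
    using Rstar_cancel[OF assms(2), of "Some e" None] \<open>e \<in> U\<close> by simp
  then show ?thesis by simp
qed

lemma Lstar_idem_mult:
  assumes "idem e" "Lstar U e a"
  shows "a * e = a"
proof -
  have "e \<in> U" using assms(2) unfolding Lstar_def by simp
  have "rmul e (Some e) = rmul e None" using assms(1) by (simp add: idem_def)
  then have "rmul a (Some e) = rmul a None"
    using Lstar_cancel[OF assms(2), of "Some e" None] \<open>e \<in> U\<close> by simp
  then show ?thesis by simp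
qed

lemma Rstar_idems_mult:
  assumes "idem e" "Rstar U e a" "Rstar U f a"
  shows "e * f = f"
proof -
  have "e \<in> U" using assms(2) unfolding Rstar_def by simp
  have "lmul (Some e) a = lmul None a" using Rstar_idem_mult[OF assms(1,2)] by simp
  then have "lmul (Some e) f = lmul None f"
    using Rstar_cancel[OF assms(3), of "Some e" None] \<open>e \<in> U\<close> by simp
  then show ?thesis by simp
qed

lemma Lstar_idems_mult:
  assumes "idem e" "Lstar U e a" "Lstar U f a"
  shows "f * e = f"
proof -
  have "e \<in> U" using assms(2) unfolding Lstar_def by simp
  have "rmul a (Some e) = rmul a None" using Lstar_idem_mult[OF assms(1,2)] by simp
  then have "rmul f (Some e) = rmul f None"
    using Lstar_cancel[OF assms(3), of "Some e" None] \<open>e \<in> U\<close> by simp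
  then show ?thesis by simp
qed

lemma adequate_commute:
  "adequate U \<Longrightarrow> e \<in> U \<Longrightarrow> f \<in> U \<Longrightarrow> idem e \<Longrightarrow> idem f \<Longrightarrow> e * f = f * e"
  unfolding adequate_def by blast

lemma aplus_spec:
  assumes "adequate U" "a \<in> U"
  shows "aplus U a \<in> U \<and> idem (aplus U a) \<and> Rstar U (aplus U a) a"
proof -
  have "\<exists>e\<in>U. idem e \<and> Rstar U e a"
    using assms unfolding adequate_def abundant_def by blast
  moreover have "e = f" if "e \<in> U" "idem e" "Rstar U e a" "f \<in> U" "idem f" "Rstar U f a" for e f
    using Rstar_idems_mult[of e U a f] Rstar_idems_mult[of f U a e] adequate_commute[OF assms(1)]
      that by metis
  ultimately have "\<exists>!e. e \<in> U \<and> idem e \<and> Rstar U e a" by blast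
  from theI'[OF this] show ?thesis unfolding aplus_def .
qed

lemma astar_spec:
  assumes "adequate U" "a \<in> U"
  shows "astar U a \<in> U \<and> idem (astar U a) \<and> Lstar U (astar U a) a"
proof -
  have "\<exists>e\<in>U. idem e \<and> Lstar U e a"
    using assms unfolding adequate_def abundant_def by blast
  moreover have "e = f" if "e \<in> U" "idem e" "Lstar U e a" "f \<in> U" "idem f" "Lstar U f a" for e f
    using Lstar_idems_mult[of e U a f] Lstar_idems_mult[of f U a e] adequate_commute[OF assms(1)]
      that by metis
  ultimately have "\<exists>!e. e \<in> U \<and> idem e \<and> Lstar U e a" by blast
  from theI'[OF this] show ?thesis unfolding astar_def .
qed

lemma greenR_imp_Rstar: "greenR a b \<Longrightarrow> Rstar UNIV a b"
  unfolding greenR_def Rstar_def by (metis UNIV_I lmul_rmul_assoc)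

lemma greenL_idem_mult:
  assumes "idem g" "greenL f g"
  shows "f * g = f"
proof -
  obtain u where "f = lmul u g" using assms(2) unfolding greenL_def by blast
  then show ?thesis using assms(1) by (cases u) (simp_all add: idem_def mult.assoc)
qed

lemma left_adequate_greenR_idem_eq:
  assumes "left_adequate (UNIV :: 'a::semigroup_mult set)" "idem f" "idem g" "greenR f (g::'a)"
  shows "f = g"
proof -
  have "\<exists>!e. e \<in> UNIV \<and> idem e \<and> Rstar UNIV e g"
    using assms(1) unfolding left_adequate_def by blast
  then show ?thesis
    using greenR_imp_Rstar[OF assms(4)] Rstar_refl[of g UNIV] assms(2,3) by blast
qed

lemma decomp_right_factor:
  assumes "left_adequate (UNIV :: 'a::semigroup_mult set)" "adequate S0"
    and "decomp S0 x a e (f::'a)"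
  shows "f = astar S0 a"
  using assms left_adequate_greenR_idem_eq astar_spec unfolding decomp_def by blast

lemma decomp_eq_mult:
  assumes "left_adequate (UNIV :: 'a::semigroup_mult set)" "adequate S0"
    and "decomp S0 x a e (f::'a)"
  shows "x = e * a"
proof -
  have "a \<in> S0" "x = e * a * astar S0 a"
    using assms(3) decomp_right_factor[OF assms] unfolding decomp_def by simp_all
  then show ?thesis using Lstar_idem_mult astar_spec[OF assms(2)] by (metis mult.assoc)
qed

lemma decomp_left_factor_unique:
  assumes "left_adequate (UNIV :: 'a::semigroup_mult set)" "adequate_transversal S0"
    and "decomp S0 x a e f" "decomp S0 x a e' (f'::'a)"
  shows "e = e'"
proof -
  have ad: "adequate S0" and ss: "star_subsemigroup S0"
    using assms(2) unfolding adequate_transversal_def by auto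
  let ?p = "aplus S0 a"
  have a: "a \<in> S0" using assms(3) unfolding decomp_def by simp
  have p: "?p \<in> S0" "idem ?p" "Rstar S0 ?p a" using aplus_spec[OF ad a] by auto
  then have "Rstar UNIV ?p a" using ss a unfolding star_subsemigroup_def by blast
  moreover have "e * a = e' * a"
    using decomp_eq_mult[OF assms(1) ad assms(3)] decomp_eq_mult[OF assms(1) ad assms(4)] by simp
  ultimately have "e * ?p = e' * ?p"
    using Rstar_cancel[of UNIV ?p a "Some e" "Some e'"] by simp
  moreover have "e * ?p = e" "e' * ?p = e'"
    using assms(3,4) greenL_idem_mult[OF p(2)] unfolding decomp_def by auto
  ultimately show ?thesis by simp
qed

lemma decomp_self:
  assumes "adequate S0" "a \<in> S0"
  shows "decomp S0 a a (aplus S0 a) (astar S0 a)"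
proof -
  have "aplus S0 a * a * astar S0 a = a"
    using aplus_spec[OF assms] astar_spec[OF assms] Rstar_idem_mult Lstar_idem_mult by metis
  then show ?thesis
    using aplus_spec[OF assms] astar_spec[OF assms] assms(2)
    unfolding decomp_def greenL_def greenR_def by (metis lmul.simps(1) rmul.simps(1))
qed

context
  fixes S0 :: "'a::semigroup_mult set"
  assumes transversal: "adequate_transversal S0"
begin

lemma decomp_bar: "\<exists>e f. decomp S0 x (bar S0 x) e f"
  using theI'[of "\<lambda>xb. \<exists>e f. decomp S0 x xb e f"] transversal
  unfolding adequate_transversal_def bar_def by blast

lemma bar_of_mem: "a \<in> S0 \<Longrightarrow> bar S0 a = a"
  using decomp_self[of S0 a] decomp_bar[of a] transversal
  unfolding adequate_transversal_def by blast

lemma bar_mem: "bar S0 x \<in> S0"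
  using decomp_bar[of x] unfolding decomp_def by blast

lemma f_of_eq_astar_bar:
  assumes "left_adequate (UNIV :: 'a set)"
  shows "f_of S0 x = astar S0 (bar S0 x)"
proof -
  have "adequate S0" using transversal unfolding adequate_transversal_def by simp
  then show ?thesis
    unfolding f_of_def using decomp_bar[of x] decomp_right_factor[OF assms]
    by (intro the_equality) blast+
qed

lemma e_of_mult_bar:
  assumes "left_adequate (UNIV :: 'a set)"
  shows "x = e_of S0 x * bar S0 x"
proof -
  obtain e f where d: "decomp S0 x (bar S0 x) e f" using decomp_bar by blast
  have "e_of S0 x = e"
    unfolding e_of_def using d decomp_left_factor_unique[OF assms transversal]
    by (intro the_equality) blast+
  moreover have "adequate S0" using transversal unfolding adequate_transversal_def by simp
  ultimately show ?thesis using decomp_eq_mult[OF assms _ d] by simp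
qed

end

theorem corollary2p2:
  fixes S0 :: "'a::semigroup_mult set"
  assumes "left_adequate (UNIV :: 'a set)"
    and "adequate_transversal S0"
  shows "\<forall>x. f_of S0 x = f_of S0 (bar S0 x) \<and> x = e_of S0 x * bar S0 x"
proof
  fix x
  have "f_of S0 x = astar S0 (bar S0 (bar S0 x))"
    using f_of_eq_astar_bar[OF assms(2,1)] bar_of_mem[OF assms(2) bar_mem[OF assms(2)]] by simp
  also have "\<dots> = f_of S0 (bar S0 x)"
    using f_of_eq_astar_bar[OF assms(2,1)] by simp
  finally show "f_of S0 x = f_of S0 (bar S0 x) \<and> x = e_of S0 x * bar S0 x"
    using e_of_mult_bar[OF assms(2,1)] by simp
qed

end
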